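(* Let $\Omega = \{-1\} \cup [0,\infty)$, let $E$ be the Banach space of all bounded continuous real functions on $\Omega$ with the supremum norm $\|\cdot\|$, and let $$C = \{ x \in E : 0 \le x(u) \le 1 \text{ for all } u \in \Omega,\ |x(u_1)-x(u_2)| \le |u_1-u_2| \text{ for all } u_1,u_2 \in [0,\infty)\}.$$ For $x \in C$ and $v \ge 0$ put $\alpha_x(v) = \sup\{ x(s) : s \in \{-1\}\cup[v,\infty)\}$. Then: (i) $|\alpha_x(u_1) - \alpha_x(u_2)| \le |u_1 - u_2|$ for all $x \in C$ and $u_1,u_2 \in [0,\infty)$; (ii) $|\alpha_x(u) - \alpha_y(u)| \le \|x-y\|$ for all $x,y \in C$ and $u \in [0,\infty)$. *)

theory Defs
  imports "HOL-Analysis.Analysis"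
begin

text \<open>Omega = {-1} union [0,infinity), as a subset of the reals. Elements of E are
  represented as functions real to real, considered only on Omega.\<close>

definition Omega :: "real set" where
  "Omega = {-1} \<union> {0..}"

definition E_space :: "(real \<Rightarrow> real) set" where
  "E_space = {x. continuous_on Omega x \<and> bounded (x ` Omega)}"

definition supnorm :: "(real \<Rightarrow> real) \<Rightarrow> real" where
  "supnorm x = (SUP u\<in>Omega. \<bar>x u\<bar>)"

definition C_set :: "(real \<Rightarrow> real) set" where
  "C_set = {x \<in> E_space. (\<forall>u\<in>Omega. 0 \<le> x u \<and> x u \<le> 1) \<and>
             (\<forall>u1\<in>{0..}. \<forall>u2\<in>{0..}. \<bar>x u1 - x u2\<bar> \<le> \<bar>u1 - u2\<bar>)}"

definition alpha :: "(real \<Rightarrow> real) \<Rightarrow> real \<Rightarrow> real" where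
  "alpha x v = (SUP s\<in>({-1} \<union> {v..}). x s)"

end

theory Submission
  imports Defs
begin

text \<open>For (i) with
  \<open>u\<^sub>1 \<le> u\<^sub>2\<close>, shrinking the tail can only lower the supremum, while every point
  \<open>s \<in> [u\<^sub>1, u\<^sub>2)\<close> that is lost satisfies \<open>x s \<le> x u\<^sub>2 + (u\<^sub>2 - u\<^sub>1)\<close> by the Lipschitz
  condition. For (ii), \<open>x s \<le> y s + \<parallel>x - y\<parallel> \<le> \<alpha>\<^sub>y(u) + \<parallel>x - y\<parallel>\<close> at every point of the
  tail.\<close>

lemma tail_subset_Omega: "0 \<le> v \<Longrightarrow> {-1} \<union> {v..} \<subseteq> Omega"
  unfolding Omega_def by auto

lemma C_set_E_space: "x \<in> C_set \<Longrightarrow> x \<in> E_space"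
  unfolding C_set_def by auto

lemma C_set_lipschitz:
  "x \<in> C_set \<Longrightarrow> 0 \<le> a \<Longrightarrow> 0 \<le> b \<Longrightarrow> \<bar>x a - x b\<bar> \<le> \<bar>a - b\<bar>"
  unfolding C_set_def by auto

lemma E_space_bdd_above: "x \<in> E_space \<Longrightarrow> bdd_above (x ` Omega)"
  unfolding E_space_def by (auto intro: bounded_imp_bdd_above)

lemma E_space_diff: "x \<in> E_space \<Longrightarrow> y \<in> E_space \<Longrightarrow> (\<lambda>s. x s - y s) \<in> E_space"
  unfolding E_space_def by (auto intro: continuous_on_diff bounded_minus_comp)

lemma abs_le_supnorm:
  assumes "x \<in> E_space" "s \<in> Omega"
  shows "\<bar>x s\<bar> \<le> supnorm x"
proof -
  have "bdd_above ((\<lambda>s. \<bar>x s\<bar>) ` Omega)"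
    using assms(1) bounded_norm_comp[of x Omega]
    unfolding E_space_def by (auto intro: bounded_imp_bdd_above)
  then show ?thesis
    unfolding supnorm_def using assms(2) by (rule cSUP_upper2) simp
qed

lemma supnorm_minus_commute: "supnorm (\<lambda>s. x s - y s) = supnorm (\<lambda>s. y s - x s)"
  unfolding supnorm_def by (simp add: abs_minus_commute)

lemma alpha_upper:
  assumes "bdd_above (x ` Omega)" "0 \<le> v" "s \<in> {-1} \<union> {v..}"
  shows "x s \<le> alpha x v"
proof -
  have "bdd_above (x ` ({-1} \<union> {v..}))"
    using assms(1) tail_subset_Omega[OF assms(2)] by (rule bdd_above_mono[OF _ image_mono])
  then show ?thesis
    unfolding alpha_def using assms(3) by (intro cSUP_upper)
qed

lemma alpha_least:
  assumes "\<And>s. s \<in> {-1} \<union> {v..} \<Longrightarrow> x s \<le> M"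
  shows "alpha x v \<le> M"
  unfolding alpha_def by (rule cSUP_least) (use assms in auto)

lemma alpha_antimono:
  assumes "bdd_above (x ` Omega)" "0 \<le> u\<^sub>1" "u\<^sub>1 \<le> u\<^sub>2"
  shows "alpha x u\<^sub>2 \<le> alpha x u\<^sub>1"
  by (rule alpha_least) (use alpha_upper[OF assms(1,2)] assms(3) in auto)

lemma alpha_le_alpha_plus_shift:
  assumes bdd: "bdd_above (x ` Omega)"
    and lip: "\<And>a b. 0 \<le> a \<Longrightarrow> 0 \<le> b \<Longrightarrow> \<bar>x a - x b\<bar> \<le> \<bar>a - b\<bar>"
    and "0 \<le> u\<^sub>1" "u\<^sub>1 \<le> u\<^sub>2"
  shows "alpha x u\<^sub>1 \<le> alpha x u\<^sub>2 + (u\<^sub>2 - u\<^sub>1)"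
proof (rule alpha_least)
  fix s assume s: "s \<in> {-1} \<union> {u\<^sub>1..}"
  have u\<^sub>2: "0 \<le> u\<^sub>2" using assms(3,4) by linarith
  show "x s \<le> alpha x u\<^sub>2 + (u\<^sub>2 - u\<^sub>1)"
  proof (cases "s \<in> {-1} \<union> {u\<^sub>2..}")
    case True
    then show ?thesis using alpha_upper[OF bdd u\<^sub>2] assms(4) by fastforce
  next
    case False
    with s have "u\<^sub>1 \<le> s" "s < u\<^sub>2" by auto
    moreover have "\<bar>x s - x u\<^sub>2\<bar> \<le> \<bar>s - u\<^sub>2\<bar>"
      using lip assms(3) \<open>u\<^sub>1 \<le> s\<close> u\<^sub>2 by simp
    moreover have "x u\<^sub>2 \<le> alpha x u\<^sub>2" using alpha_upper[OF bdd u\<^sub>2] by simp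
    ultimately show ?thesis by linarith
  qed
qed

lemma alpha_lipschitz:
  assumes bdd: "bdd_above (x ` Omega)"
    and lip: "\<And>a b. 0 \<le> a \<Longrightarrow> 0 \<le> b \<Longrightarrow> \<bar>x a - x b\<bar> \<le> \<bar>a - b\<bar>"
    and "0 \<le> u\<^sub>1" "0 \<le> u\<^sub>2"
  shows "\<bar>alpha x u\<^sub>1 - alpha x u\<^sub>2\<bar> \<le> \<bar>u\<^sub>1 - u\<^sub>2\<bar>"
proof -
  have ordered: "\<bar>alpha x a - alpha x b\<bar> \<le> \<bar>a - b\<bar>" if "0 \<le> a" "a \<le> b" for a b
    using alpha_antimono[OF bdd that] alpha_le_alpha_plus_shift[OF bdd lip that] that(2)
    by linarith
  show ?thesis
    using ordered[of u\<^sub>1 u\<^sub>2] ordered[of u\<^sub>2 u\<^sub>1] assms(3,4)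
    by (cases "u\<^sub>1 \<le> u\<^sub>2") (auto simp: abs_minus_commute)
qed

lemma alpha_diff_le_supnorm:
  assumes "x \<in> E_space" "y \<in> E_space" "0 \<le> u"
  shows "alpha x u - alpha y u \<le> supnorm (\<lambda>s. x s - y s)"
proof -
  have "alpha x u \<le> alpha y u + supnorm (\<lambda>s. x s - y s)"
  proof (rule alpha_least)
    fix s assume s: "s \<in> {-1} \<union> {u..}"
    then have "s \<in> Omega" using tail_subset_Omega[OF assms(3)] by blast
    then have "\<bar>x s - y s\<bar> \<le> supnorm (\<lambda>s. x s - y s)"
      using abs_le_supnorm[OF E_space_diff[OF assms(1,2)]] by simp
    moreover have "y s \<le> alpha y u"
      using alpha_upper[OF E_space_bdd_above[OF assms(2)] assms(3) s] .
    ultimately show "x s \<le> alpha y u + supnorm (\<lambda>s. x s - y s)" by linarith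
  qed
  then show ?thesis by linarith
qed

lemma abs_alpha_diff_le_supnorm:
  assumes "x \<in> E_space" "y \<in> E_space" "0 \<le> u"
  shows "\<bar>alpha x u - alpha y u\<bar> \<le> supnorm (\<lambda>s. x s - y s)"
  using alpha_diff_le_supnorm[OF assms] alpha_diff_le_supnorm[OF assms(2,1,3)]
  by (simp add: supnorm_minus_commute[of y x])

theorem lemma2p2:
  shows "(\<forall>x\<in>C_set. \<forall>u1\<in>{0::real..}. \<forall>u2\<in>{0..}.
            \<bar>alpha x u1 - alpha x u2\<bar> \<le> \<bar>u1 - u2\<bar>)
       \<and> (\<forall>x\<in>C_set. \<forall>y\<in>C_set. \<forall>u\<in>{0::real..}.
            \<bar>alpha x u - alpha y u\<bar> \<le> supnorm (\<lambda>s. x s - y s))"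
proof (intro conjI ballI)
  fix x u1 u2 assume "x \<in> C_set" "u1 \<in> {0::real..}" "u2 \<in> {0::real..}"
  then show "\<bar>alpha x u1 - alpha x u2\<bar> \<le> \<bar>u1 - u2\<bar>"
    by (intro alpha_lipschitz E_space_bdd_above C_set_E_space C_set_lipschitz) auto
next
  fix x y u assume "x \<in> C_set" "y \<in> C_set" "u \<in> {0::real..}"
  then show "\<bar>alpha x u - alpha y u\<bar> \<le> supnorm (\<lambda>s. x s - y s)"
    by (intro abs_alpha_diff_le_supnorm C_set_E_space) auto
qed

end
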